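(* There is $\alpha_0>0$ such that for every $\alpha\in(0,\alpha_0]$ with $1/\alpha\in\mathbb{N}$ there is $\vartheta_0>0$ such that for every $0<\vartheta\leq\vartheta_0$ there is $n_0$ such that for all $n\geq n_0$ the following holds. Let $H=([n],E)$ be a $3$-uniform hypergraph with $d(i,j)\geq\min\left(i,j,\frac{n}{2}\right)+\alpha n$ for all $\{i,j\}\in[n]^{(2)}$, and let $\mathcal{R}\subseteq[n]$ be a set with $\frac{\vartheta^2}{2}n\leq|\mathcal{R}|\leq\vartheta^2 n$ such that, for some positive integer $L$, for all disjoint ordered pairs of distinct vertices $(x,y),(w,z)\in[n]^2$ there are at least $\vartheta|\mathcal{R}|^{L-2}/2$ tight paths of length $L$ in $H$ connecting $(x,y)$ and $(w,z)$ with all internal vertices in $\mathcal{R}$. Then for every $x\in[n]$, the number of $(x,\alpha)$-absorbers lying in $([n]\setminus\mathcal{R})^{4s(\alpha)}$ is at least $\left(\frac{\alpha n}{3}\right)^{4s(\alpha)}$, where $s(\alpha)=2/\alpha$.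
   Context: Vertices are the integers $[n]$, compared as integers. $d(v,w)=|\{x:\{v,w,x\}\in E\}|$ is the pair degree. A tight path of length $\ell$ is a 3-graph on distinct vertices $x_1,\dots,x_{\ell+2}$ with edges $x_ix_{i+1}x_{i+2}$, $i\in[\ell]$; we write it as the vertex sequence $x_1x_2\dots x_{\ell+2}$; it connects $(x_1,x_2)$ and $(x_{\ell+1},x_{\ell+2})$ and has internal vertices $x_3,\dots,x_\ell$. Absorber: with $s=s(\alpha)=2/\alpha$ (an even integer), for $x\in[n]$ a $4s$-tuple $(v_1,w_1,y_1,z_1,\dots,v_s,w_s,y_s,z_s)\in[n]^{4s}$ of distinct vertices is an $(x,\alpha)$-absorber in $H$ if (1) $v_1w_1xy_1z_1$ is a tight path in $H$; (2) for each $i\in[s-1]$, $v_iw_iy_{i+1}z_{i+1}$ and $v_{i+1}w_{i+1}y_iz_i$ are tight paths in $H$; (3) $v_sw_sy_sz_s$ is a tight path in $H$. *)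

theory Defs
  imports Main "HOL-Library.Extended_Real" Complex_Main
begin

definition three_graph :: "nat \<Rightarrow> nat set set \<Rightarrow> bool" where
  "three_graph n E \<longleftrightarrow> (\<forall>e\<in>E. e \<subseteq> {1..n} \<and> card e = 3)"

definition pair_deg :: "nat set set \<Rightarrow> nat \<Rightarrow> nat \<Rightarrow> nat" where
  "pair_deg E v w = card {x. {v, w, x} \<in> E}"

text \<open>A tight path, written as its vertex sequence x_1 ... x_(l+2) (l >= 1):
  distinct vertices, and each three consecutive vertices form an edge.\<close>
definition tight_path :: "nat set set \<Rightarrow> nat list \<Rightarrow> bool" where
  "tight_path E xs \<longleftrightarrow> distinct xs \<and> length xs \<ge> 3 \<and>
     (\<forall>i. i + 2 < length xs \<longrightarrow> {xs ! i, xs ! (i+1), xs ! (i+2)} \<in> E)"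

definition connecting_paths ::
  "nat set set \<Rightarrow> nat set \<Rightarrow> nat \<Rightarrow> nat \<Rightarrow> nat \<Rightarrow> nat \<Rightarrow> nat \<Rightarrow> nat list set" where
  "connecting_paths E R L x y w z =
     {p. tight_path E p \<and> length p = L + 2 \<and> p ! 0 = x \<and> p ! 1 = y \<and>
         p ! L = w \<and> p ! (L+1) = z \<and> (\<forall>i. 2 \<le> i \<and> i < L \<longrightarrow> p ! i \<in> R)}"

text \<open>s(alpha) = 2/alpha (an integer when 1/alpha is a natural number).\<close>
definition s_of :: "real \<Rightarrow> nat" where
  "s_of \<alpha> = nat \<lfloor>2 / \<alpha>\<rfloor>"

text \<open>(x,alpha)-absorber: a 4s-tuple (v_1,w_1,y_1,z_1,...,v_s,w_s,y_s,z_s) of distinct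
  vertices of [n], encoded as a list a with v_(i+1) = a!(4i), w_(i+1) = a!(4i+1),
  y_(i+1) = a!(4i+2), z_(i+1) = a!(4i+3) for i < s.\<close>
definition absorber :: "nat set set \<Rightarrow> nat \<Rightarrow> real \<Rightarrow> nat \<Rightarrow> nat list \<Rightarrow> bool" where
  "absorber E n \<alpha> x a \<longleftrightarrow>
     (let s = s_of \<alpha> in
       length a = 4 * s \<and> distinct a \<and> set a \<subseteq> {1..n} \<and>
       tight_path E [a ! 0, a ! 1, x, a ! 2, a ! 3] \<and>
       (\<forall>i. i + 1 < s \<longrightarrow>
          tight_path E [a ! (4*i), a ! (4*i+1), a ! (4*(i+1)+2), a ! (4*(i+1)+3)] \<and>
          tight_path E [a ! (4*(i+1)), a ! (4*(i+1)+1), a ! (4*i+2), a ! (4*i+3)]) \<and>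
       tight_path E [a ! (4*(s-1)), a ! (4*(s-1)+1), a ! (4*(s-1)+2), a ! (4*(s-1)+3)])"

end

theory Submission
  imports Defs
begin

(* Absorbers are built vertex by vertex, in the order y_1 w_1 v_1 z_1 y_2 w_2 v_2 z_2 ...
   Each new vertex must close the absorber edges whose other two vertices (its anchors) are
   already chosen, so it ranges over a common neighbourhood of size at least
   min(a, b, n/2) + alpha n. Requiring every vertex of the i-th block to exceed the threshold
   min(i alpha n/2, n/2) puts the anchors of block i above min((i-1) alpha n/2, n/2), which
   leaves alpha n/2 candidates above the threshold of block i. Only v_s and z_s, which need no
   threshold, have to close two edges at once; their anchors all exceed n/2, and two
   neighbourhoods of size at least n/2 + alpha n share 2 alpha n vertices. Discarding R, x and
   the vertices used so far leaves alpha n/3 choices at each of the 4s steps. *)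

definition grown_by :: "('a list \<Rightarrow> 'a \<Rightarrow> bool) \<Rightarrow> 'a list \<Rightarrow> bool" where
  "grown_by ext q \<longleftrightarrow> (\<forall>j < length q. ext (take j q) (q ! j))"

lemma grown_by_Nil [simp]: "grown_by ext []"
  by (simp add: grown_by_def)

lemma grown_by_snoc [simp]: "grown_by ext (p @ [u]) \<longleftrightarrow> grown_by ext p \<and> ext p u"
  by (auto simp: grown_by_def nth_append less_Suc_eq)

lemma grown_lists_0: "{q. length q = 0 \<and> grown_by ext q} = {[]}"
  by auto

lemma grown_lists_Suc:
  "{q. length q = Suc m \<and> grown_by ext q} =
     (\<lambda>(p, u). p @ [u]) ` (SIGMA p:{p. length p = m \<and> grown_by ext p}. {u. ext p u})"
proof (intro equalityI subsetI)
  fix q assume "q \<in> {q. length q = Suc m \<and> grown_by ext q}"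
  then show "q \<in> (\<lambda>(p, u). p @ [u]) ` (SIGMA p:{p. length p = m \<and> grown_by ext p}. {u. ext p u})"
    by (cases q rule: rev_cases) auto
qed auto

lemma finite_grown_lists:
  assumes "\<And>p. finite {u. ext p u}"
  shows "finite {q. length q = m \<and> grown_by ext q}"
proof (induction m)
  case 0
  show ?case
    unfolding grown_lists_0 by simp
next
  case (Suc m)
  then show ?case
    unfolding grown_lists_Suc using assms by blast
qed

lemma card_grown_lists_ge:
  fixes ext :: "'a list \<Rightarrow> 'a \<Rightarrow> bool" and K :: real
  assumes "K \<ge> 0" and finite_ext: "\<And>p. finite {u. ext p u}"
    and card_ext: "\<And>p. length p < m \<Longrightarrow> grown_by ext p \<Longrightarrow> K \<le> real (card {u. ext p u})"
  shows "K ^ m \<le> real (card {q. length q = m \<and> grown_by ext q})"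
  using card_ext
proof (induction m)
  case 0
  show ?case
    unfolding grown_lists_0 by simp
next
  case (Suc m)
  let ?S = "{p. length p = m \<and> grown_by ext p}"
  have "inj_on (\<lambda>(p, u). p @ [u]) (SIGMA p:?S. {u. ext p u})"
    by (auto simp: inj_on_def)
  then have card_Suc: "card {q. length q = Suc m \<and> grown_by ext q} = (\<Sum>p\<in>?S. card {u. ext p u})"
    unfolding grown_lists_Suc
    by (simp add: card_image card_SigmaI finite_grown_lists finite_ext)
  have "K ^ m \<le> real (card ?S)"
    using Suc by simp
  then have "K ^ Suc m \<le> real (card ?S) * K"
    using \<open>K \<ge> 0\<close> by (simp add: mult.commute mult_left_mono)
  also have "\<dots> = (\<Sum>p\<in>?S. K)"
    by simp
  also have "\<dots> \<le> (\<Sum>p\<in>?S. real (card {u. ext p u}))"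
    using Suc.prems by (intro sum_mono) auto
  finally show ?case
    by (simp add: card_Suc)
qed

fun reorder :: "'a list \<Rightarrow> 'a list" where
  "reorder (y # w # v # z # q) = v # w # y # z # reorder q"
| "reorder q = q"

lemma reorder_reorder [simp]: "reorder (reorder q) = q"
  by (induction q rule: reorder.induct) auto

lemma length_reorder [simp]: "length (reorder q) = length q"
  by (induction q rule: reorder.induct) auto

lemma set_reorder [simp]: "set (reorder q) = set q"
  by (induction q rule: reorder.induct) auto

lemma distinct_reorder [simp]: "distinct (reorder q) \<longleftrightarrow> distinct q"
  by (induction q rule: reorder.induct) auto

lemma inj_reorder: "inj reorder"
  by (metis injI reorder_reorder)

lemma reorder_short: "length q < 4 \<Longrightarrow> reorder q = q"
  by (cases q rule: reorder.cases) auto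

lemma drop_reorder: "drop (4 * i) (reorder q) = reorder (drop (4 * i) q)"
proof (induction q arbitrary: i rule: reorder.induct)
  case (1 y w v z q)
  show ?case
  proof (cases i)
    case (Suc j)
    then have "4 * i = Suc (Suc (Suc (Suc (4 * j))))"
      by simp
    then show ?thesis
      using "1.IH" by simp
  qed simp
qed (simp_all add: reorder_short)

lemma reorder_nth:
  assumes "4 * i + 3 < length q"
  shows "reorder q ! (4 * i) = q ! (4 * i + 2)" "reorder q ! (4 * i + 1) = q ! (4 * i + 1)"
    "reorder q ! (4 * i + 2) = q ! (4 * i)" "reorder q ! (4 * i + 3) = q ! (4 * i + 3)"
proof -
  have "4 \<le> length (drop (4 * i) q)"
    using assms by simp
  then obtain y w v z rest where "drop (4 * i) q = y # w # v # z # rest"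
    by (cases "drop (4 * i) q" rule: reorder.cases) auto
  moreover have "q ! (4 * i + r) = drop (4 * i) q ! r"
    and "reorder q ! (4 * i + r) = reorder (drop (4 * i) q) ! r" for r
    using assms by (simp_all flip: drop_reorder)
  ultimately have q_nth: "q ! (4 * i + r) = [y, w, v, z] ! r"
    and reorder_q_nth: "reorder q ! (4 * i + r) = [v, w, y, z] ! r" if "r < 4" for r
    using that by (simp_all add: nth_Cons')
  show "reorder q ! (4 * i) = q ! (4 * i + 2)"
    using q_nth[of 2] reorder_q_nth[of 0] by simp
  show "reorder q ! (4 * i + 1) = q ! (4 * i + 1)"
    using q_nth[of 1] reorder_q_nth[of 1] by simp
  show "reorder q ! (4 * i + 2) = q ! (4 * i)"
    using q_nth[of 0] reorder_q_nth[of 2] by simp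
  show "reorder q ! (4 * i + 3) = q ! (4 * i + 3)"
    using q_nth[of 3] reorder_q_nth[of 3] by simp
qed

lemma card_filter_greater_ge:
  fixes N :: "nat set" and L :: real
  assumes "finite N" "0 \<notin> N" "L \<ge> 0"
  shows "real (card N) - L \<le> real (card {u \<in> N. L < real u})"
proof -
  have "{u \<in> N. \<not> L < real u} \<subseteq> {1..nat \<lfloor>L\<rfloor>}"
    using assms(2) by (auto simp: le_nat_floor not_less Suc_le_eq intro!: gr0I)
  then have "card {u \<in> N. \<not> L < real u} \<le> nat \<lfloor>L\<rfloor>"
    using card_mono[of "{1..nat \<lfloor>L\<rfloor>}"] by simp
  then have "real (card {u \<in> N. \<not> L < real u}) \<le> L"
    using assms(3) by linarith
  moreover have "N = {u \<in> N. L < real u} \<union> {u \<in> N. \<not> L < real u}"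
    by auto
  then have "card N \<le> card {u \<in> N. L < real u} + card {u \<in> N. \<not> L < real u}"
    by (metis card_Un_le)
  ultimately show ?thesis by linarith
qed

lemma card_Int_ge:
  assumes "finite U" "A \<subseteq> U" "B \<subseteq> U"
  shows "card A + card B \<le> card U + card (A \<inter> B)"
proof -
  have "finite A" "finite B" using assms finite_subset by auto
  then show ?thesis
    using card_Un_Int[of A B] card_mono[of U "A \<union> B"] assms by simp
qed

lemma tight_path_4:
  "tight_path E [a, b, c, d] \<longleftrightarrow> distinct [a, b, c, d] \<and> {a, b, c} \<in> E \<and> {b, c, d} \<in> E"
  by (auto simp: tight_path_def less_Suc_eq numeral_eq_Suc)

lemma tight_path_5:
  "tight_path E [a, b, c, d, e] \<longleftrightarrow>
     distinct [a, b, c, d, e] \<and> {a, b, c} \<in> E \<and> {b, c, d} \<in> E \<and> {c, d, e} \<in> E"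
  by (auto simp: tight_path_def less_Suc_eq numeral_eq_Suc)

definition threshold :: "real \<Rightarrow> nat \<Rightarrow> nat \<Rightarrow> real" where
  "threshold \<alpha> n i = min (real i * (\<alpha> * real n / 2)) (real n / 2)"

lemma threshold_0 [simp]: "threshold \<alpha> n 0 = 0"
  by (simp add: threshold_def)

lemma threshold_nonneg: "0 \<le> \<alpha> \<Longrightarrow> 0 \<le> threshold \<alpha> n i"
  by (simp add: threshold_def)

lemma threshold_le_half: "threshold \<alpha> n i \<le> real n / 2"
  by (simp add: threshold_def)

lemma threshold_mono: "0 \<le> \<alpha> \<Longrightarrow> i \<le> j \<Longrightarrow> threshold \<alpha> n i \<le> threshold \<alpha> n j"
  unfolding threshold_def by (intro min.mono mult_right_mono) auto

lemma threshold_Suc_le: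
  "0 \<le> \<alpha> \<Longrightarrow> threshold \<alpha> n (Suc i) \<le> threshold \<alpha> n i + \<alpha> * real n / 2"
proof -
  assume "0 \<le> \<alpha>"
  then have "0 \<le> \<alpha> * real n"
    by simp
  moreover have "real (Suc i) * (\<alpha> * real n / 2) = real i * (\<alpha> * real n / 2) + \<alpha> * real n / 2"
    by (simp add: algebra_simps)
  ultimately show ?thesis
    unfolding threshold_def by linarith
qed

lemma threshold_last:
  assumes "0 \<le> \<alpha>" "\<alpha> \<le> 1" "real s * \<alpha> = 2" "s \<le> Suc i"
  shows "threshold \<alpha> n i = real n / 2"
proof -
  have "1 \<le> (real s - 1) * \<alpha>"
    using assms(2,3) by (simp add: algebra_simps)
  also have "\<dots> \<le> real i * \<alpha>"
    using assms by (intro mult_right_mono) (auto simp: zero_le_mult_iff)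
  finally have "real n / 2 \<le> real i * (\<alpha> * real n / 2)"
    using mult_right_mono[of 1 "real i * \<alpha>" "real n / 2"] by simp
  then show ?thesis
    by (simp add: threshold_def)
qed

(* The slots of v_s and z_s in the choice order. *)
definition final_slot :: "nat \<Rightarrow> nat \<Rightarrow> bool" where
  "final_slot s k \<longleftrightarrow> Suc (k div 4) = s \<and> 2 \<le> k mod 4"

(* p lists the vertices chosen so far in the order y_1 w_1 v_1 z_1 y_2 ..., so that Y j, W j,
   V j, Z j below are y_(j+1), w_(j+1), v_(j+1), z_(j+1); (a, b) is an anchor if {a, b, u} is an
   edge of the absorber for the vertex u chosen next. *)
definition anchors :: "nat \<Rightarrow> nat \<Rightarrow> nat list \<Rightarrow> (nat \<times> nat) set" where
  "anchors s x p =
    (let k = length p; i = k div 4;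
         Y = \<lambda>j. p ! (4 * j); W = \<lambda>j. p ! (4 * j + 1);
         V = \<lambda>j. p ! (4 * j + 2); Z = \<lambda>j. p ! (4 * j + 3)
     in (if k = 0 then {}
         else if k = 1 then {(x, Y 0)}
         else if k = 2 then {(W 0, x)}
         else if k = 3 then {(x, Y 0)}
         else if k mod 4 = 0 then {(V (i - 1), W (i - 1))}
         else if k mod 4 = 1 then {(Y (i - 1), Z (i - 1))}
         else if k mod 4 = 2 then {(W i, Y (i - 1))}
         else {(W (i - 1), Y i)})
        \<union> (if final_slot s k then {(W i, Y i)} else {}))"

lemma anchors_first_block:
  assumes "2 \<le> s"
  shows "anchors s x [] = {}"
    and "length p = 1 \<Longrightarrow> anchors s x p = {(x, p ! 0)}"
    and "length p = 2 \<Longrightarrow> anchors s x p = {(p ! 1, x)}"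
    and "length p = 3 \<Longrightarrow> anchors s x p = {(x, p ! 0)}"
  using assms by (simp_all add: anchors_def final_slot_def Let_def)

lemma anchors_later_block:
  shows "length p = 4 * Suc m \<Longrightarrow> anchors s x p = {(p ! (4 * m + 2), p ! (4 * m + 1))}"
    and "length p = 4 * Suc m + 1 \<Longrightarrow> anchors s x p = {(p ! (4 * m), p ! (4 * m + 3))}"
    and "length p = 4 * Suc m + 2 \<Longrightarrow> anchors s x p = {(p ! (4 * Suc m + 1), p ! (4 * m))} \<union>
           (if Suc (Suc m) = s then {(p ! (4 * Suc m + 1), p ! (4 * Suc m))} else {})"
    and "length p = 4 * Suc m + 3 \<Longrightarrow> anchors s x p = {(p ! (4 * m + 1), p ! (4 * Suc m))} \<union>
           (if Suc (Suc m) = s then {(p ! (4 * Suc m + 1), p ! (4 * Suc m))} else {})"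
  by (simp_all add: anchors_def final_slot_def Let_def)

lemma anchors_single: "\<not> final_slot s (length p) \<Longrightarrow> \<exists>P. anchors s x p \<subseteq> {P}"
  unfolding anchors_def Let_def by simp

lemma anchors_final: "final_slot s (length p) \<Longrightarrow> \<exists>P Q. anchors s x p = {P, Q}"
  unfolding anchors_def Let_def final_slot_def by (simp; blast)

locale codegree_condition =
  fixes E :: "nat set set" and n :: nat and \<alpha> :: real
  assumes three_graph: "three_graph n E"
    and pair_deg_ge: "\<And>i j. i \<in> {1..n} \<Longrightarrow> j \<in> {1..n} \<Longrightarrow> i \<noteq> j \<Longrightarrow>
      min (min (real i) (real j)) (real n / 2) + \<alpha> * real n \<le> real (pair_deg E i j)"
begin

lemma edge_vertex: "{a, b, u} \<in> E \<Longrightarrow> u \<in> {1..n}"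
  using three_graph by (auto simp: three_graph_def)

lemma card_nbrs_greater_ge:
  assumes "a \<in> {1..n}" "b \<in> {1..n}" "a \<noteq> b" "0 \<le> L"
  shows "min (min (real a) (real b)) (real n / 2) + \<alpha> * real n - L
           \<le> real (card {u. {a, b, u} \<in> E \<and> L < real u})"
proof -
  have "{u. {a, b, u} \<in> E} \<subseteq> {1..n}"
    using edge_vertex by blast
  then have "finite {u. {a, b, u} \<in> E}" "0 \<notin> {u. {a, b, u} \<in> E}"
    using finite_subset by auto
  from card_filter_greater_ge[OF this \<open>0 \<le> L\<close>] show ?thesis
    using pair_deg_ge[OF assms(1-3)] by (simp add: pair_deg_def)
qed

lemma card_common_nbrs_ge:
  assumes "a \<in> {1..n}" "b \<in> {1..n}" "a \<noteq> b" "a' \<in> {1..n}" "b' \<in> {1..n}" "a' \<noteq> b'"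
    and "real n / 2 \<le> real a" "real n / 2 \<le> real b" "real n / 2 \<le> real a'" "real n / 2 \<le> real b'"
  shows "2 * \<alpha> * real n \<le> real (card ({u. {a, b, u} \<in> E} \<inter> {u. {a', b', u} \<in> E}))"
proof -
  have "card {u. {a, b, u} \<in> E} + card {u. {a', b', u} \<in> E}
          \<le> card {1..n} + card ({u. {a, b, u} \<in> E} \<inter> {u. {a', b', u} \<in> E})"
    using edge_vertex by (intro card_Int_ge) auto
  then show ?thesis
    using pair_deg_ge[OF assms(1-3)] pair_deg_ge[OF assms(4-6)] assms(7-10)
    by (simp add: pair_deg_def)
qed

end

locale absorber_construction = codegree_condition +
  fixes R :: "nat set" and s x :: nat
  assumes R_subset: "R \<subseteq> {1..n}"
    and card_R: "real (card R) \<le> \<alpha> * real n / 16"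
    and n_large: "12 * (1 + 4 * real s) \<le> \<alpha> * real n"
    and alpha_le_1: "\<alpha> \<le> 1"
    and s_alpha: "real s * \<alpha> = 2"
    and x_in: "x \<in> {1..n}"
begin

lemma alpha_pos: "0 < \<alpha>"
proof (rule ccontr)
  assume "\<not> 0 < \<alpha>"
  then have "real s * \<alpha> \<le> 0"
    by (simp add: mult_nonneg_nonpos)
  then show False
    using s_alpha by simp
qed

lemma s_ge_2: "2 \<le> s"
proof -
  have "real s = 2 / \<alpha>"
    using s_alpha alpha_pos by (simp add: field_simps)
  also have "2 / \<alpha> \<ge> 2"
    using alpha_pos alpha_le_1 by (simp add: field_simps)
  finally show ?thesis
    by simp
qed

lemma s_of_alpha: "s_of \<alpha> = s"
proof -
  have "2 / \<alpha> = real s"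
    using s_alpha alpha_pos by (simp add: field_simps)
  then show ?thesis
    by (simp add: s_of_def)
qed

definition admissible :: "nat list \<Rightarrow> nat \<Rightarrow> bool" where
  "admissible p u \<longleftrightarrow> u \<in> {1..n} - R \<and> u \<noteq> x \<and> u \<notin> set p \<and>
     (\<forall>(a, b) \<in> anchors s x p. {a, b, u} \<in> E) \<and>
     (final_slot s (length p) \<or> threshold \<alpha> n (Suc (length p div 4)) < real u)"

lemma finite_admissible: "finite {u. admissible p u}"
  by (rule finite_subset[of _ "{1..n}"]) (auto simp: admissible_def)

lemma grown_admissible_nth:
  assumes "grown_by admissible p" "j < length p"
  shows "p ! j \<in> {1..n} - R" "p ! j \<noteq> x"
    and "\<not> final_slot s j \<Longrightarrow> threshold \<alpha> n (Suc (j div 4)) < real (p ! j)"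
    and "(a, b) \<in> anchors s x (take j p) \<Longrightarrow> {a, b, p ! j} \<in> E"
  using assms by (auto simp: grown_by_def admissible_def)

lemma grown_admissible_distinct:
  assumes "grown_by admissible p"
  shows "distinct p"
proof -
  have "\<forall>j < length p. \<forall>i < j. p ! i \<noteq> p ! j"
    using assms by (auto simp: grown_by_def admissible_def in_set_conv_nth)
  then show ?thesis
    by (metis distinct_conv_nth linorder_neqE_nat)
qed

lemma grown_above_threshold:
  assumes "grown_by admissible p" "j < length p"
    and "j mod 4 < 2 \<or> Suc (j div 4) < s" "i \<le> Suc (j div 4)"
  shows "threshold \<alpha> n i < real (p ! j)"
proof -
  have "threshold \<alpha> n (Suc (j div 4)) < real (p ! j)"
    using grown_admissible_nth(3)[OF assms(1,2)] assms(3) by (auto simp: final_slot_def)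
  moreover have "threshold \<alpha> n i \<le> threshold \<alpha> n (Suc (j div 4))"
    using threshold_mono alpha_pos assms(4) by simp
  ultimately show ?thesis
    by simp
qed

lemma grown_nth_neq:
  assumes "grown_by admissible p" "j < length p" "k < length p" "j \<noteq> k"
  shows "p ! j \<noteq> p ! k"
  using grown_admissible_distinct[OF assms(1)] assms(2-) by (simp add: nth_eq_iff_index_eq)

lemma anchors_first_block_valid:
  assumes p: "grown_by admissible p" "length p < 4" and ab: "(a, b) \<in> anchors s x p"
  shows "a \<in> {1..n} \<and> b \<in> {1..n} \<and> a \<noteq> b"
proof -
  from p(2) consider "length p = 0" | "length p = 1" | "length p = 2" | "length p = 3"
    by linarith
  then show ?thesis
    using ab anchors_first_block[OF s_ge_2] x_in
      grown_admissible_nth(1,2)[OF p(1), of 0] grown_admissible_nth(1,2)[OF p(1), of 1]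
    by cases auto
qed

lemma anchors_later_block_above_threshold:
  assumes p: "grown_by admissible p" "length p = 4 * Suc m + r" "r < 4" "Suc m < s"
    and ab: "(a, b) \<in> anchors s x p"
  shows "a \<in> {1..n} \<and> b \<in> {1..n} \<and> a \<noteq> b \<and>
    threshold \<alpha> n (Suc m) < real a \<and> threshold \<alpha> n (Suc m) < real b"
proof -
  have prev: "p ! (4 * m + j) \<in> {1..n} \<and> threshold \<alpha> n (Suc m) < real (p ! (4 * m + j))"
    if "j < 4" for j
    using grown_admissible_nth(1)[OF p(1)] grown_above_threshold[OF p(1)] that p(2,4) by simp
  have cur: "p ! (4 * Suc m + j) \<in> {1..n} \<and> threshold \<alpha> n (Suc m) < real (p ! (4 * Suc m + j))"
    if "j < 2" "j < r" for j
  proof -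
    have "(4 * Suc m + j) div 4 = Suc m" "(4 * Suc m + j) mod 4 = j"
      using that(1) by presburger+
    then show ?thesis
      using grown_admissible_nth(1)[OF p(1)] grown_above_threshold[OF p(1)] that p(2) by simp
  qed
  from p(3) consider "r = 0" | "r = 1" | "r = 2" | "r = 3"
    by linarith
  then show ?thesis
    using ab anchors_later_block[of p m s x] p(2) prev[of 0] prev[of 1] prev[of 2] prev[of 3]
      cur[of 0] cur[of 1] grown_nth_neq[OF p(1)]
    by cases (auto split: if_splits)
qed

lemma anchors_above_threshold:
  assumes p: "grown_by admissible p" "length p < 4 * s" and ab: "(a, b) \<in> anchors s x p"
  shows "a \<in> {1..n} \<and> b \<in> {1..n} \<and> a \<noteq> b \<and>
    threshold \<alpha> n (length p div 4) < real a \<and> threshold \<alpha> n (length p div 4) < real b"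
proof (cases "length p < 4")
  case True
  then show ?thesis
    using anchors_first_block_valid[OF p(1) True ab] by simp
next
  case False
  define m where "m = length p div 4 - 1"
  have "length p div 4 = Suc m" "length p = 4 * Suc m + length p mod 4"
    using False unfolding m_def by presburger+
  moreover have "Suc m < s"
    using p(2) calculation(1) by linarith
  ultimately show ?thesis
    using anchors_later_block_above_threshold[OF p(1) _ _ _ ab] by simp
qed

lemma card_candidates_ge:
  assumes p: "grown_by admissible p" "length p < 4 * s"
  defines "i \<equiv> length p div 4"
  shows "\<alpha> * real n / 2 \<le> real (card {u \<in> {1..n}. (\<forall>(a, b) \<in> anchors s x p. {a, b, u} \<in> E) \<and>
           (final_slot s (length p) \<or> threshold \<alpha> n (Suc i) < real u)})"
    (is "_ \<le> real (card ?C)")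
proof (cases "final_slot s (length p)")
  case True
  then obtain a b a' b' where A: "anchors s x p = {(a, b), (a', b')}"
    using anchors_final by fastforce
  have "threshold \<alpha> n i = real n / 2"
    using True alpha_pos alpha_le_1 s_alpha by (intro threshold_last) (auto simp: i_def final_slot_def)
  then have "2 * \<alpha> * real n \<le> real (card ({u. {a, b, u} \<in> E} \<inter> {u. {a', b', u} \<in> E}))"
    using anchors_above_threshold[OF p, of a b] anchors_above_threshold[OF p, of a' b'] A
    by (intro card_common_nbrs_ge) (auto simp: i_def)
  moreover have "{u. {a, b, u} \<in> E} \<inter> {u. {a', b', u} \<in> E} \<subseteq> ?C"
    using True A edge_vertex by auto
  then have "real (card ({u. {a, b, u} \<in> E} \<inter> {u. {a', b', u} \<in> E})) \<le> real (card ?C)"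
    by (intro of_nat_mono card_mono) auto
  moreover have "0 \<le> \<alpha> * real n"
    using alpha_pos by simp
  ultimately show ?thesis
    by linarith
next
  case False
  then consider "anchors s x p = {}" | a b where "anchors s x p = {(a, b)}"
    using anchors_single by (metis subset_singleton_iff surj_pair)
  then show ?thesis
  proof cases
    case 1
    have "real (card {1..n}) - threshold \<alpha> n (Suc i) \<le> real (card {u \<in> {1..n}. threshold \<alpha> n (Suc i) < real u})"
      using alpha_pos by (intro card_filter_greater_ge threshold_nonneg) auto
    moreover have "\<alpha> * real n \<le> real n"
      using mult_right_mono[OF alpha_le_1, of "real n"] by simp
    ultimately show ?thesis
      using 1 False threshold_le_half[of \<alpha> n "Suc i"] by simp
  next
    case 2
    have "?C = {u. {a, b, u} \<in> E \<and> threshold \<alpha> n (Suc i) < real u}"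
      using 2 False edge_vertex by auto
    then have "min (min (real a) (real b)) (real n / 2) + \<alpha> * real n - threshold \<alpha> n (Suc i)
            \<le> real (card ?C)"
      using anchors_above_threshold[OF p, of a b] 2 alpha_pos
      by (simp only:) (intro card_nbrs_greater_ge threshold_nonneg, auto)
    moreover have "threshold \<alpha> n i \<le> min (min (real a) (real b)) (real n / 2)"
      using anchors_above_threshold[OF p, of a b] 2 threshold_le_half[of \<alpha> n i] by (auto simp: i_def)
    ultimately show ?thesis
      using threshold_Suc_le[of \<alpha> n i] alpha_pos by linarith
  qed
qed

lemma card_admissible_ge:
  assumes p: "grown_by admissible p" "length p < 4 * s"
  shows "\<alpha> * real n / 3 \<le> real (card {u. admissible p u})"
proof -
  define C where "C = {u \<in> {1..n}. (\<forall>(a, b) \<in> anchors s x p. {a, b, u} \<in> E) \<and>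
    (final_slot s (length p) \<or> threshold \<alpha> n (Suc (length p div 4)) < real u)}"
  define F where "F = R \<union> insert x (set p)"
  have "{u. admissible p u} = C - F"
    by (auto simp: admissible_def C_def F_def)
  moreover have "card C - card F \<le> card (C - F)"
    using R_subset finite_subset by (intro diff_card_le_card_Diff) (auto simp: F_def)
  ultimately have "real (card C) \<le> real (card {u. admissible p u}) + real (card F)"
    by (simp flip: of_nat_add)
  moreover have "card F \<le> card R + card (insert x (set p))"
    unfolding F_def by (rule card_Un_le)
  then have "real (card F) \<le> real (card R) + 1 + 4 * real s"
    using card_length[of "x # p"] p(2) by simp
  moreover have "\<alpha> * real n / 2 \<le> real (card C)"
    unfolding C_def by (rule card_candidates_ge[OF p])
  ultimately show ?thesis
    using card_R n_large by (simp add: field_simps)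
qed

lemma grown_absorber_edges:
  assumes q: "grown_by admissible q" "length q = 4 * s"
  shows "{x, q ! 0, q ! 1} \<in> E" "{q ! 1, x, q ! 2} \<in> E" "{x, q ! 0, q ! 3} \<in> E"
    and "Suc m < s \<Longrightarrow> {q ! (4 * m + 2), q ! (4 * m + 1), q ! (4 * Suc m)} \<in> E"
    and "Suc m < s \<Longrightarrow> {q ! (4 * m), q ! (4 * m + 3), q ! (4 * Suc m + 1)} \<in> E"
    and "Suc m < s \<Longrightarrow> {q ! (4 * Suc m + 1), q ! (4 * m), q ! (4 * Suc m + 2)} \<in> E"
    and "Suc m < s \<Longrightarrow> {q ! (4 * m + 1), q ! (4 * Suc m), q ! (4 * Suc m + 3)} \<in> E"
    and "Suc (Suc m) = s \<Longrightarrow> {q ! (4 * Suc m + 1), q ! (4 * Suc m), q ! (4 * Suc m + 2)} \<in> E"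
    and "Suc (Suc m) = s \<Longrightarrow> {q ! (4 * Suc m + 1), q ! (4 * Suc m), q ! (4 * Suc m + 3)} \<in> E"
proof -
  have edge: "{a, b, q ! k} \<in> E" if "(a, b) \<in> anchors s x (take k q)" "k < 4 * s" for a b k
    using grown_admissible_nth(4)[OF q(1)] that q(2) by simp
  have "4 \<le> 4 * s"
    using s_ge_2 by simp
  then show "{x, q ! 0, q ! 1} \<in> E" "{q ! 1, x, q ! 2} \<in> E" "{x, q ! 0, q ! 3} \<in> E"
    using edge[of x "q ! 0" 1] edge[of "q ! 1" x 2] edge[of x "q ! 0" 3]
      anchors_first_block[OF s_ge_2] q(2)
    by auto
  show "{q ! (4 * m + 2), q ! (4 * m + 1), q ! (4 * Suc m)} \<in> E"
    and "{q ! (4 * m), q ! (4 * m + 3), q ! (4 * Suc m + 1)} \<in> E"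
    and "{q ! (4 * Suc m + 1), q ! (4 * m), q ! (4 * Suc m + 2)} \<in> E"
    and "{q ! (4 * m + 1), q ! (4 * Suc m), q ! (4 * Suc m + 3)} \<in> E"
    if "Suc m < s"
    using that edge anchors_later_block q(2)
    by auto
  show "{q ! (4 * Suc m + 1), q ! (4 * Suc m), q ! (4 * Suc m + 2)} \<in> E"
    and "{q ! (4 * Suc m + 1), q ! (4 * Suc m), q ! (4 * Suc m + 3)} \<in> E"
    if "Suc (Suc m) = s"
    using that edge anchors_later_block q(2)
    by auto
qed

lemma absorber_reorder_grown:
  assumes q: "grown_by admissible q" "length q = 4 * s"
  shows "absorber E n \<alpha> x (reorder q)"
proof -
  let ?a = "reorder q"
  have dist: "distinct (x # q)"
    using grown_admissible_distinct[OF q(1)] grown_admissible_nth(2)[OF q(1)]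
    by (auto simp: in_set_conv_nth)
  have ne [simp]: "q ! j = q ! k \<longleftrightarrow> j = k" if "j < 4 * s" "k < 4 * s" for j k
    using dist that q(2) by (simp add: nth_eq_iff_index_eq)
  have nx [simp]: "q ! j \<noteq> x" "x \<noteq> q ! j" if "j < 4 * s" for j
    using dist that q(2) by (auto simp: in_set_conv_nth)
  have "4 * 0 + 3 < length q"
    using q(2) s_ge_2 by simp
  from reorder_nth[OF this]
  have "?a ! 0 = q ! 2" "?a ! 1 = q ! 1" "?a ! 2 = q ! 0" "?a ! 3 = q ! 3"
    by (simp_all add: numeral_2_eq_2)
  then have first: "tight_path E [?a ! 0, ?a ! 1, x, ?a ! 2, ?a ! 3]"
    using grown_absorber_edges(1-3)[OF q] s_ge_2 by (simp add: tight_path_5 insert_commute)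
  have middle:
    "tight_path E [?a ! (4 * i), ?a ! (4 * i + 1), ?a ! (4 * (i + 1) + 2), ?a ! (4 * (i + 1) + 3)] \<and>
     tight_path E [?a ! (4 * (i + 1)), ?a ! (4 * (i + 1) + 1), ?a ! (4 * i + 2), ?a ! (4 * i + 3)]"
    if "i + 1 < s" for i
  proof -
    have "4 * i + 3 < length q" "4 * Suc i + 3 < length q"
      using that q(2) by simp_all
    then show ?thesis
      using reorder_nth[of i q] reorder_nth[of "Suc i" q] grown_absorber_edges(4-7)[OF q, of i] that
      by (simp add: tight_path_4 insert_commute)
  qed
  obtain m where m: "s = Suc (Suc m)"
    using s_ge_2 by (metis add_2_eq_Suc le_Suc_ex)
  have last:
    "tight_path E [?a ! (4 * (s - 1)), ?a ! (4 * (s - 1) + 1), ?a ! (4 * (s - 1) + 2), ?a ! (4 * (s - 1) + 3)]"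
  proof -
    have "4 * Suc m + 3 < length q"
      using m q(2) by simp
    then show ?thesis
      using reorder_nth[of "Suc m" q] grown_absorber_edges(8,9)[OF q, of m] m
      by (simp add: tight_path_4 insert_commute)
  qed
  have "set q \<subseteq> {1..n}"
    using grown_admissible_nth(1)[OF q(1)] by (auto simp: in_set_conv_nth)
  then show ?thesis
    unfolding absorber_def Let_def s_of_alpha
    using first middle last dist q(2) by simp
qed

lemma card_absorbers_ge:
  "(\<alpha> * real n / 3) ^ (4 * s_of \<alpha>) \<le> real (card {a. absorber E n \<alpha> x a \<and> set a \<subseteq> {1..n} - R})"
proof -
  let ?G = "{q. length q = 4 * s \<and> grown_by admissible q}"
  have "(\<alpha> * real n / 3) ^ (4 * s) \<le> real (card ?G)"
    using alpha_pos card_admissible_ge finite_admissible by (intro card_grown_lists_ge) auto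
  also have "card ?G = card (reorder ` ?G)"
    by (rule card_image[symmetric]) (rule inj_on_subset[OF inj_reorder], simp)
  also have "\<dots> \<le> card {a. absorber E n \<alpha> x a \<and> set a \<subseteq> {1..n} - R}"
  proof (rule card_mono)
    have "{a. absorber E n \<alpha> x a \<and> set a \<subseteq> {1..n} - R} \<subseteq> {a. set a \<subseteq> {1..n} \<and> length a = 4 * s}"
      by (auto simp: absorber_def Let_def s_of_alpha)
    then show "finite {a. absorber E n \<alpha> x a \<and> set a \<subseteq> {1..n} - R}"
      by (rule finite_subset) (simp add: finite_lists_length_eq)
    show "reorder ` ?G \<subseteq> {a. absorber E n \<alpha> x a \<and> set a \<subseteq> {1..n} - R}"
      using absorber_reorder_grown grown_admissible_nth(1) by (force simp: in_set_conv_nth)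
  qed
  finally show ?thesis
    by (simp add: s_of_alpha)
qed

end

lemma card_absorbers_ge_if_large:
  fixes \<alpha> :: real and k :: nat
  assumes "three_graph n E"
    and "\<forall>i\<in>{1..n}. \<forall>j\<in>{1..n}. i \<noteq> j \<longrightarrow>
      min (min (real i) (real j)) (real n / 2) + \<alpha> * real n \<le> real (pair_deg E i j)"
    and "R \<subseteq> {1..n}" "real (card R) \<le> \<alpha> * real n / 16"
    and "0 < \<alpha>" "\<alpha> \<le> 1" "\<alpha> * real k = 1" "12 * (1 + 8 * k) * k \<le> n" "x \<in> {1..n}"
  shows "(\<alpha> * real n / 3) ^ (4 * s_of \<alpha>) \<le> real (card {a. absorber E n \<alpha> x a \<and> set a \<subseteq> {1..n} - R})"
proof -
  have "12 * (1 + 4 * real (2 * k)) = 12 * (1 + 8 * real k) * (\<alpha> * real k)"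
    using assms(7) by simp
  also have "\<dots> = \<alpha> * real (12 * (1 + 8 * k) * k)"
    by (simp add: algebra_simps)
  also have "\<dots> \<le> \<alpha> * real n"
    using assms(5,8) by (intro mult_left_mono of_nat_mono) simp_all
  finally have "12 * (1 + 4 * real (2 * k)) \<le> \<alpha> * real n" .
  moreover have "real (2 * k) * \<alpha> = 2"
    using assms(7) by (simp add: algebra_simps)
  ultimately interpret absorber_construction E n \<alpha> R "2 * k" x
    using assms by unfold_locales auto
  show ?thesis
    by (rule card_absorbers_ge)
qed

theorem lemma5p2:
  shows "\<exists>\<alpha>0>0. \<forall>\<alpha>::real. 0 < \<alpha> \<and> \<alpha> \<le> \<alpha>0 \<and> (\<exists>k::nat. 1 / \<alpha> = real k) \<longrightarrow>
    (\<exists>\<theta>0>0. \<forall>\<theta>::real. 0 < \<theta> \<and> \<theta> \<le> \<theta>0 \<longrightarrow>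
      (\<exists>n0::nat. \<forall>n\<ge>n0. \<forall>E R.
         three_graph n E \<and>
         (\<forall>i\<in>{1..n}. \<forall>j\<in>{1..n}. i \<noteq> j \<longrightarrow>
            real (pair_deg E i j) \<ge> min (min (real i) (real j)) (real n / 2) + \<alpha> * real n) \<and>
         R \<subseteq> {1..n} \<and>
         \<theta>^2 / 2 * real n \<le> real (card R) \<and> real (card R) \<le> \<theta>^2 * real n \<and>
         (\<exists>L::nat. L > 0 \<and>
            (\<forall>x\<in>{1..n}. \<forall>y\<in>{1..n}. \<forall>w\<in>{1..n}. \<forall>z\<in>{1..n}.
               x \<noteq> y \<and> w \<noteq> z \<and> {x, y} \<inter> {w, z} = {} \<longrightarrow>
               real (card (connecting_paths E R L x y w z)) \<ge> \<theta> * real (card R) ^ (L - 2) / 2))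
         \<longrightarrow>
         (\<forall>x\<in>{1..n}.
            real (card {a. absorber E n \<alpha> x a \<and> set a \<subseteq> {1..n} - R})
              \<ge> (\<alpha> * real n / 3) ^ (4 * s_of \<alpha>))))"
proof (rule exI[of _ "1::real"], intro conjI allI impI, goal_cases)
  case 1
  show ?case by simp
next
  case (2 \<alpha>)
  then obtain k :: nat where \<alpha>: "0 < \<alpha>" "\<alpha> \<le> 1" "\<alpha> * real k = 1"
    by (auto simp: field_simps)
  show ?case
  proof (rule exI[of _ "\<alpha> / 4"], intro conjI allI impI, goal_cases)
    case 1
    show ?case using \<alpha> by simp
  next
    case (2 \<theta>)
    have "\<theta>\<^sup>2 \<le> (\<alpha> / 4)\<^sup>2"
      using 2 by (intro power_mono) auto
    also have "\<dots> \<le> \<alpha> / 16"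
      using \<alpha> by (simp add: power2_eq_square mult_le_cancel_left1)
    finally have \<theta>_sq: "\<theta>\<^sup>2 \<le> \<alpha> / 16" .
    show ?case
    proof (rule exI[of _ "12 * (1 + 8 * k) * k"], intro allI impI ballI, goal_cases)
      case (1 n E R x)
      then have "real (card R) \<le> \<theta>\<^sup>2 * real n"
        by blast
      then have "real (card R) \<le> \<alpha> * real n / 16"
        using mult_right_mono[OF \<theta>_sq, of "real n"] by simp
      with 1 \<alpha> show ?case
        by (intro card_absorbers_ge_if_large) auto
    qed
  qed
qed

end
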